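(* Fix $0<m<2M$. For $s_1,s_2\in\{+,-\}$ and $\xi_1,\xi_2\in\mathbb{R}^3$ define \[ \mu^{s_1,s_2}(\xi_1,\xi_2):=\langle\xi_1-\xi_2\rangle_m+s_1\langle\xi_1\rangle_M-s_2\langle\xi_2\rangle_M . \] There is a (sufficiently small) absolute constant $c>0$ such that the following hold, with implicit constants depending only on $m,M$ (and $c$). Case 1: If (a) $s_1=+,s_2=-$, or (b) $s_1=-,s_2=+$ and $\langle\xi_1-\xi_2\rangle_m\le c\min(\langle\xi_1\rangle_M,\langle\xi_2\rangle_M)$, then \[ |\mu^{s_1,s_2}(\xi_1,\xi_2)|\gtrsim \max(\langle\xi_1-\xi_2\rangle,\langle\xi_1\rangle,\langle\xi_2\rangle). \] Case 2: If (a) $s_1=s_2$, or (b) $s_1=-,s_2=+$ and $\langle\xi_1-\xi_2\rangle_m> c\min(\langle\xi_1\rangle_M,\langle\xi_2\rangle_M)$, then \[ |\mu^{s_1,s_2}(\xi_1,\xi_2)|\gtrsim \frac{\langle\xi_1\rangle\langle\xi_2\rangle}{\langle\xi_1-\xi_2\rangle}\,\angle(s_1\xi_1,s_2\xi_2)^2 . \] For every choice of signs $s_1,s_2$ one has both \[ |\mu^{s_1,s_2}(\xi_1,\xi_2)|\gtrsim \min(\langle\xi_1\rangle,\langle\xi_2\rangle)\,\angle(s_1\xi_1,s_2\xi_2)^2 \] and \[ |\mu^{s_1,s_2}(\xi_1,\xi_2)|\gtrsim \max(\langle\xi_1-\xi_2\rangle^{-1},\langle\xi_1\rangle^{-1},\langle\xi_2\rangle^{-1}).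 \]
   Context: For $a\ge0$, $\langle\xi\rangle_a:=(a^2+|\xi|^2)^{1/2}$ and $\langle\xi\rangle:=\langle\xi\rangle_1$. For nonzero vectors $x,y\in\mathbb{R}^3$, $\angle(x,y)\in[0,\pi]$ denotes the angle between $x$ and $y$. $A\gtrsim B$ means $A\ge C^{-1}B$ for a constant $C>0$ (here depending only on $m,M$). *)

theory Defs
  imports "HOL-Analysis.Analysis"
begin

text \<open>Japanese bracket: jb a xi = (a^2 + |xi|^2)^(1/2); jb 1 xi is the plain bracket.\<close>
definition jb :: "real \<Rightarrow> real^3 \<Rightarrow> real" where
  "jb a \<xi> = sqrt (a\<^sup>2 + (norm \<xi>)\<^sup>2)"

definition vangle :: "real^3 \<Rightarrow> real^3 \<Rightarrow> real" where
  "vangle x y = arccos ((x \<bullet> y) / (norm x * norm y))"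

text \<open>Phase function; signs s1, s2 are encoded as reals in {1, -1}.\<close>
definition mu :: "real \<Rightarrow> real \<Rightarrow> real \<Rightarrow> real \<Rightarrow> real^3 \<Rightarrow> real^3 \<Rightarrow> real" where
  "mu m M s1 s2 \<xi>1 \<xi>2 = jb m (\<xi>1 - \<xi>2) + s1 * jb M \<xi>1 - s2 * jb M \<xi>2"

end

theory Submission
  imports Defs
begin

(*
  Write a = |xi1|, b = |xi2|, p = xi1 . xi2, d = |xi1 - xi2| and A, B, D for the brackets
  <xi1>_M, <xi2>_M, <xi1 - xi2>_m. For the sign pairs (+,-) and, when D <= min(A,B)/2, (-,+)
  the modulus of the phase dominates each of A, B, D, hence every bracket. Otherwise
  rationalising the phase gives
    (A + B)^2 - D^2 = (4M^2 - m^2) + 2(AB - ab - M^2) + 2(ab + p)        for (-,+),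
    (D + A)^2 - B^2 = m^2 + 2(ab - p) + 2(AD - ad) + 2a(a - b + d)      for (+,+),
  a sum of nonnegative terms (the first because m < 2M, the cross terms because
  AB - ab >= M^2 and AD > ad); the pair (-,-) is (+,+) with xi1 and xi2 exchanged.
  The summand ab -+ p = ab (1 -+ cos) controls the squared angle, as arccos(t)^2 <= 18 (1 - t),
  and the remaining summands give lower bounds by the inverse brackets.
*)

lemma one_minus_cos_le_half_sq:
  fixes x :: real assumes "0 \<le> x" shows "1 - cos x \<le> x\<^sup>2 / 2"
proof -
  let ?f = "\<lambda>x. x\<^sup>2 / 2 - 1 + cos x"
  have "\<exists>y. (?f has_real_derivative y) (at u) \<and> 0 \<le> y" if "0 \<le> u" "u \<le> x" for u
    using sin_x_le_x[OF \<open>0 \<le> u\<close>]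
    by (intro exI[of _ "u - sin u"]) (auto intro!: derivative_eq_intros)
  then have "?f 0 \<le> ?f x"
    by (rule DERIV_nonneg_imp_nondecreasing [OF assms])
  then show ?thesis by simp
qed

lemma sin_ge_cubic:
  fixes x :: real assumes "0 \<le> x" shows "x - x ^ 3 / 6 \<le> sin x"
proof -
  let ?f = "\<lambda>x. sin x - x + x ^ 3 / 6"
  have "\<exists>y. (?f has_real_derivative y) (at u) \<and> 0 \<le> y" if "0 \<le> u" "u \<le> x" for u
    using one_minus_cos_le_half_sq[OF \<open>0 \<le> u\<close>]
    by (intro exI[of _ "cos u - 1 + u\<^sup>2 / 2"])
      (auto intro!: derivative_eq_intros simp: power2_eq_square power3_eq_cube)
  then have "?f 0 \<le> ?f x"
    by (rule DERIV_nonneg_imp_nondecreasing [OF assms])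
  then show ?thesis by simp
qed

text \<open>With \<open>\<theta> = arccos t = 2y\<close> one has \<open>1 - t = 2 sin\<^sup>2 y\<close>, and \<open>sin y \<ge> y/3\<close> on \<open>[0, \<pi>/2]\<close>.\<close>
lemma arccos_sq_le:
  fixes t :: real assumes "-1 \<le> t" "t \<le> 1" shows "(arccos t)\<^sup>2 \<le> 18 * (1 - t)"
proof -
  define y where "y = arccos t / 2"
  have "0 \<le> y" "y \<le> 2"
    using arccos_bounded[OF assms] pi_less_4 by (auto simp: y_def)
  have t_eq: "t = 1 - 2 * (sin y)\<^sup>2"
    using cos_double_sin[of y] cos_arccos[OF assms] by (simp add: y_def)
  have "y * y \<le> 4"
    using mult_mono[of y 2 y 2] \<open>0 \<le> y\<close> \<open>y \<le> 2\<close> by simp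
  then have "y ^ 3 / 6 \<le> y * 4 / 6"
    using mult_left_mono[of "y * y" 4 y] \<open>0 \<le> y\<close> by (simp add: power3_eq_cube)
  then have "y / 3 \<le> sin y"
    using sin_ge_cubic[OF \<open>0 \<le> y\<close>] by simp
  then have "y\<^sup>2 \<le> 9 * (sin y)\<^sup>2"
    using \<open>0 \<le> y\<close> power_mono[of "y / 3" "sin y" 2] by (simp add: power_divide)
  have "(arccos t)\<^sup>2 = 4 * y\<^sup>2"
    by (simp add: y_def power2_eq_square)
  also have "\<dots> \<le> 36 * (sin y)\<^sup>2"
    using \<open>y\<^sup>2 \<le> 9 * (sin y)\<^sup>2\<close> by simp
  also have "\<dots> = 18 * (1 - t)"
    using t_eq by simp
  finally show ?thesis .
qed

lemma vangle_arg_bound: "\<bar>x \<bullet> y / (norm x * norm y)\<bar> \<le> 1"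
  using Cauchy_Schwarz_ineq2[of x y]
  by (cases "norm x * norm y = 0") (auto simp: abs_divide divide_le_eq_1)

lemma vangle_range: "0 \<le> vangle x y" "vangle x y \<le> pi"
  using vangle_arg_bound[of x y] unfolding vangle_def abs_le_iff
  by (auto intro: arccos_lbound arccos_ubound)

lemma vangle_sq_le:
  assumes "x \<noteq> 0" "y \<noteq> 0"
  shows "(vangle x y)\<^sup>2 * (norm x * norm y) \<le> 18 * (norm x * norm y - x \<bullet> y)"
proof -
  define t where "t = x \<bullet> y / (norm x * norm y)"
  have xy: "0 < norm x * norm y" using assms by simp
  have "\<bar>t\<bar> \<le> 1"
    using vangle_arg_bound by (simp add: t_def)
  then have "(vangle x y)\<^sup>2 \<le> 18 * (1 - t)"
    unfolding vangle_def t_def[symmetric] by (intro arccos_sq_le) auto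
  then have "(vangle x y)\<^sup>2 * (norm x * norm y) \<le> 18 * (1 - t) * (norm x * norm y)"
    using xy by (intro mult_right_mono) auto
  also have "\<dots> = 18 * (norm x * norm y - x \<bullet> y)"
    using xy by (simp add: t_def field_simps)
  finally show ?thesis .
qed

definition jbracket :: "real \<Rightarrow> real \<Rightarrow> real" where
  "jbracket N x = sqrt (N\<^sup>2 + x\<^sup>2)"

lemma jb_eq_jbracket: "jb N \<xi> = jbracket N (norm \<xi>)"
  by (simp add: jb_def jbracket_def)

lemma jbracket_sq: "(jbracket N x)\<^sup>2 = N\<^sup>2 + x\<^sup>2"
  by (simp add: jbracket_def)

lemma jbracket_ge_base: "0 \<le> N \<Longrightarrow> N \<le> jbracket N x"
  and jbracket_ge_arg: "0 \<le> x \<Longrightarrow> x \<le> jbracket N x"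
  by (auto simp: jbracket_def intro: real_le_rsqrt)

lemma jbracket_pos: "0 < N \<Longrightarrow> 0 < jbracket N x"
  by (simp add: jbracket_def add_pos_nonneg)

lemma jbracket_le_add:
  assumes "0 \<le> N" "0 \<le> x" shows "jbracket N x \<le> N + x"
proof -
  have "jbracket N x \<le> sqrt ((N + x)\<^sup>2)"
    unfolding jbracket_def using assms by (intro real_sqrt_le_mono) (simp add: power2_eq_square algebra_simps)
  then show ?thesis using assms by simp
qed

lemma jbracket_mono: "\<bar>x\<bar> \<le> \<bar>y\<bar> \<Longrightarrow> jbracket N x \<le> jbracket N y"
  unfolding jbracket_def by (simp add: abs_le_square_iff)

lemma jbracket_lower:
  assumes "0 \<le> N" shows "min 1 N * jbracket 1 x \<le> jbracket N x"
proof -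
  define k where "k = min 1 N"
  have "k\<^sup>2 \<le> N\<^sup>2" "k\<^sup>2 \<le> 1"
    using assms by (auto simp: k_def intro!: power_mono power_le_one)
  then have "k\<^sup>2 * (1 + x\<^sup>2) \<le> N\<^sup>2 + x\<^sup>2"
    using mult_right_mono[of "k\<^sup>2" 1 "x\<^sup>2"] by (simp add: algebra_simps)
  then have "sqrt (k\<^sup>2 * (1 + x\<^sup>2)) \<le> jbracket N x"
    by (simp add: jbracket_def)
  then show ?thesis
    using assms by (simp add: k_def jbracket_def real_sqrt_mult)
qed

lemma jbracket_upper:
  assumes "0 \<le> N" shows "jbracket N x \<le> (1 + N) * jbracket 1 x"
proof -
  have "N\<^sup>2 + x\<^sup>2 \<le> (1 + N)\<^sup>2 * (1 + x\<^sup>2)"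
    using assms by (simp add: power2_eq_square algebra_simps add_nonneg_nonneg)
  then have "jbracket N x \<le> sqrt ((1 + N)\<^sup>2 * (1 + x\<^sup>2))"
    by (simp add: jbracket_def)
  then show ?thesis
    using assms by (simp add: jbracket_def real_sqrt_mult)
qed

definition bracket_lo :: "real \<Rightarrow> real \<Rightarrow> real" where
  "bracket_lo m M = min 1 (min m M)"

definition bracket_hi :: "real \<Rightarrow> real \<Rightarrow> real" where
  "bracket_hi m M = 1 + m + M"

text \<open>The scalar data of a pair \<open>\<xi>\<^sub>1, \<xi>\<^sub>2\<close>: \<open>a = |\<xi>\<^sub>1|\<close>, \<open>b = |\<xi>\<^sub>2|\<close>, \<open>p = \<xi>\<^sub>1 \<bullet> \<xi>\<^sub>2\<close>, \<open>d = |\<xi>\<^sub>1 - \<xi>\<^sub>2|\<close>.\<close>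
locale bracket_triangle =
  fixes m M a b p d :: real
  assumes m_pos: "0 < m" and M_pos: "0 < M"
    and a_nonneg: "0 \<le> a" and b_nonneg: "0 \<le> b" and d_nonneg: "0 \<le> d"
    and d_sq: "d\<^sup>2 = a\<^sup>2 + b\<^sup>2 - 2 * p" and p_abs_le: "\<bar>p\<bar> \<le> a * b"
begin

abbreviation A where "A \<equiv> jbracket M a"
abbreviation B where "B \<equiv> jbracket M b"
abbreviation D where "D \<equiv> jbracket m d"
abbreviation ea where "ea \<equiv> jbracket 1 a"
abbreviation eb where "eb \<equiv> jbracket 1 b"
abbreviation ed where "ed \<equiv> jbracket 1 d"
abbreviation k where "k \<equiv> bracket_lo m M"
abbreviation K where "K \<equiv> bracket_hi m M"

lemma swap: "bracket_triangle m M b a p d"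
  using m_pos M_pos a_nonneg b_nonneg d_nonneg d_sq p_abs_le
  by unfold_locales (auto simp: mult.commute)

lemma A_bounds: "A\<^sup>2 = M\<^sup>2 + a\<^sup>2" "M \<le> A" "a \<le> A" "A \<le> M + a"
  and B_bounds: "B\<^sup>2 = M\<^sup>2 + b\<^sup>2" "M \<le> B" "b \<le> B" "B \<le> M + b"
  and D_bounds: "D\<^sup>2 = m\<^sup>2 + d\<^sup>2" "m \<le> D" "d \<le> D" "D \<le> m + d"
  and ea_bounds: "ea\<^sup>2 = 1 + a\<^sup>2" "1 \<le> ea" "a \<le> ea" "ea \<le> 1 + a"
  and eb_bounds: "eb\<^sup>2 = 1 + b\<^sup>2" "1 \<le> eb" "b \<le> eb" "eb \<le> 1 + b"
  and ed_bounds: "ed\<^sup>2 = 1 + d\<^sup>2" "1 \<le> ed" "d \<le> ed" "ed \<le> 1 + d"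
  using m_pos M_pos a_nonneg b_nonneg d_nonneg
  by (auto simp: jbracket_sq intro: jbracket_ge_base jbracket_ge_arg jbracket_le_add)

lemma brackets_pos: "0 < A" "0 < B" "0 < D" "0 < ea" "0 < eb" "0 < ed"
  using m_pos M_pos by (auto intro: jbracket_pos)

lemma k_props: "0 < k" "k \<le> 1" "k \<le> m" "k \<le> M"
  using m_pos M_pos by (auto simp: bracket_lo_def)

lemma K_props: "1 \<le> K" "M + 1 \<le> K" "m + 1 \<le> K"
  using m_pos M_pos by (auto simp: bracket_hi_def)

lemma brackets_comparable:
  "k * ea \<le> A" "A \<le> K * ea" "k * eb \<le> B" "B \<le> K * eb" "k * ed \<le> D" "D \<le> K * ed"
proof -
  have lo: "k * jbracket 1 x \<le> jbracket N x" if "k \<le> N" "0 < N" for N x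
  proof -
    have "k * jbracket 1 x \<le> min 1 N * jbracket 1 x"
      using that k_props by (intro mult_right_mono) (auto simp: jbracket_def)
    then show ?thesis using jbracket_lower[of N x] that by linarith
  qed
  have hi: "jbracket N x \<le> K * jbracket 1 x" if "N + 1 \<le> K" "0 < N" for N x
  proof -
    have "(1 + N) * jbracket 1 x \<le> K * jbracket 1 x"
      using that by (intro mult_right_mono) (auto simp: jbracket_def)
    then show ?thesis using jbracket_upper[of N x] that by linarith
  qed
  show "k * ea \<le> A" "k * eb \<le> B" "k * ed \<le> D"
    using lo k_props m_pos M_pos by auto
  show "A \<le> K * ea" "B \<le> K * eb" "D \<le> K * ed"
    using hi K_props m_pos M_pos by auto
qed

lemma p_le: "p \<le> a * b" "- p \<le> a * b"
  using p_abs_le by auto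

lemma triangle_ineqs: "a - b \<le> d" "b - a \<le> d" "d \<le> a + b"
proof -
  have "\<bar>a - b\<bar>\<^sup>2 \<le> d\<^sup>2" using d_sq p_le by (simp add: power2_eq_square algebra_simps)
  then have "\<bar>a - b\<bar> \<le> d" using power2_le_imp_le d_nonneg by blast
  then show "a - b \<le> d" "b - a \<le> d" by auto
  have "d\<^sup>2 \<le> (a + b)\<^sup>2" using d_sq p_le by (simp add: power2_eq_square algebra_simps)
  then show "d \<le> a + b" using power2_le_imp_le a_nonneg b_nonneg by fastforce
qed

lemma ed_le: "ed \<le> ea + eb"
proof -
  have "a * b \<le> ea * eb" using mult_mono[OF ea_bounds(3) eb_bounds(3)] brackets_pos a_nonneg b_nonneg by simp
  moreover have "d\<^sup>2 \<le> (a + b)\<^sup>2" using triangle_ineqs(3) d_nonneg by (intro power_mono) auto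
  ultimately have "ed\<^sup>2 \<le> (ea + eb)\<^sup>2" using ed_bounds(1) ea_bounds(1) eb_bounds(1)
    by (simp add: power2_eq_square algebra_simps)
  then show ?thesis using power2_le_imp_le brackets_pos by (metis add_pos_pos less_le)
qed

lemma B_le_A_iff: "B \<le> A \<longleftrightarrow> b \<le> a"
  using a_nonneg b_nonneg by (simp add: jbracket_def abs_le_square_iff[symmetric])

end

definition gap_const :: "real \<Rightarrow> real \<Rightarrow> real" where
  "gap_const m M = min ((4 * M\<^sup>2 - m\<^sup>2) / 8) (M\<^sup>2 / 4)"

text \<open>The prefixes \<open>mp\<close> and \<open>pp\<close> refer to the sign pairs \<open>(-,+)\<close> and \<open>(+,+)\<close>, for which
  \<open>A + B - D\<close> and \<open>D + A - B\<close> are the modulus of the phase. Only \<open>mp\<close> needs the mass gap.\<close>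
locale gapped_bracket_triangle = bracket_triangle +
  assumes mass_gap: "m < 2 * M"
begin

abbreviation \<epsilon> where "\<epsilon> \<equiv> gap_const m M"

lemma swap_gapped: "gapped_bracket_triangle m M b a p d"
  using swap mass_gap by (simp add: gapped_bracket_triangle_def gapped_bracket_triangle_axioms_def)

lemma gap_props: "0 < \<epsilon>" "8 * \<epsilon> \<le> 4 * M\<^sup>2 - m\<^sup>2" "4 * \<epsilon> \<le> M\<^sup>2"
proof -
  have "m * m < (2 * M) * (2 * M)" using mult_strict_mono[OF mass_gap mass_gap] m_pos M_pos by simp
  then show "0 < \<epsilon>" using M_pos by (simp add: gap_const_def power2_eq_square)
  define g where "g = 4 * M\<^sup>2 - m\<^sup>2"
  have "\<epsilon> \<le> g / 8" "\<epsilon> \<le> M\<^sup>2 / 4"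
    unfolding g_def gap_const_def by (rule min.cobounded1, rule min.cobounded2)
  then have "8 * \<epsilon> \<le> g" "4 * \<epsilon> \<le> M\<^sup>2" by linarith+
  then show "8 * \<epsilon> \<le> 4 * M\<^sup>2 - m\<^sup>2" "4 * \<epsilon> \<le> M\<^sup>2" by (simp_all only: g_def)
qed

lemma cross_term_identity: "(A * B - a * b - M\<^sup>2) * (2 * (A * B + a * b)) = M\<^sup>2 * ((A - B)\<^sup>2 + (a - b)\<^sup>2)"
  using A_bounds(1) B_bounds(1) by algebra

lemma ab_le_AB: "a * b \<le> A * B"
  using mult_mono[OF A_bounds(3) B_bounds(3)] a_nonneg b_nonneg brackets_pos by auto

lemma cross_term_nonneg: "0 \<le> A * B - a * b - M\<^sup>2"
proof -
  have "0 \<le> (A * B - a * b - M\<^sup>2) * (2 * (A * B + a * b))" unfolding cross_term_identity by simp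
  moreover have "0 < 2 * (A * B + a * b)" using brackets_pos a_nonneg b_nonneg by (simp add: add_pos_nonneg)
  ultimately show ?thesis by (simp add: zero_le_mult_iff)
qed

lemma cross_term_lower: "M\<^sup>2 * (A - B)\<^sup>2 \<le> (A * B - a * b - M\<^sup>2) * (4 * (A * B))"
proof -
  have "(A * B - a * b - M\<^sup>2) * (2 * (A * B + a * b)) \<le> (A * B - a * b - M\<^sup>2) * (4 * (A * B))"
    using cross_term_nonneg ab_le_AB by (intro mult_left_mono) auto
  moreover have "M\<^sup>2 * (A - B)\<^sup>2 \<le> M\<^sup>2 * ((A - B)\<^sup>2 + (a - b)\<^sup>2)" by (intro mult_left_mono) auto
  ultimately show ?thesis unfolding cross_term_identity by linarith
qed

lemma mp_square_identity:
  "(A + B)\<^sup>2 - D\<^sup>2 = (4 * M\<^sup>2 - m\<^sup>2) + 2 * (A * B - a * b - M\<^sup>2) + 2 * (a * b + p)"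
  using A_bounds(1) B_bounds(1) D_bounds(1) d_sq by algebra

lemma mp_phase_pos: "D < A + B"
proof -
  have "0 < (A + B)\<^sup>2 - D\<^sup>2"
    unfolding mp_square_identity using gap_props cross_term_nonneg p_le by (smt (verit))
  then show ?thesis using power2_less_imp_less brackets_pos by (metis add_pos_pos diff_gt_0_iff_gt less_le)
qed

lemma mp_square_le: "(A + B)\<^sup>2 - D\<^sup>2 \<le> (A + B - D) * (2 * (A + B))"
proof -
  have "(A + B - D) * (A + B + D) \<le> (A + B - D) * (2 * (A + B))"
    using mp_phase_pos by (intro mult_left_mono) auto
  then show ?thesis by (simp add: power2_eq_square algebra_simps)
qed

lemma mp_phase_ge_inner: "a * b + p \<le> (A + B - D) * (A + B)"
  using mp_square_le mp_square_identity gap_props cross_term_nonneg by (simp add: algebra_simps)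

lemma mp_phase_ge_gap: "\<epsilon> * (A + B) \<le> (A + B - D) * (A * B)"
proof -
  define u where "u = A + B - D"
  define f where "f = A * B - a * b - M\<^sup>2"
  have "((A + B)\<^sup>2 - D\<^sup>2) * (2 * (A * B)) \<le> u * (2 * (A + B)) * (2 * (A * B))"
    using mp_square_le brackets_pos u_def by (intro mult_right_mono) auto
  moreover have "((A + B)\<^sup>2 - D\<^sup>2) * (2 * (A * B))
      = 2 * (4 * M\<^sup>2 - m\<^sup>2) * (A * B) + f * (4 * (A * B)) + 4 * ((a * b + p) * (A * B))"
    unfolding mp_square_identity f_def by (simp add: algebra_simps)
  moreover have "M\<^sup>2 * (A - B)\<^sup>2 \<le> f * (4 * (A * B))" using cross_term_lower f_def by simp
  moreover have "0 \<le> (a * b + p) * (A * B)" using p_le brackets_pos by simp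
  moreover have "8 * \<epsilon> * (A * B) \<le> (4 * M\<^sup>2 - m\<^sup>2) * (A * B)"
    using gap_props brackets_pos by (intro mult_right_mono) auto
  moreover have "4 * \<epsilon> * (A - B)\<^sup>2 \<le> M\<^sup>2 * (A - B)\<^sup>2"
    using gap_props by (intro mult_right_mono) auto
  \<comment> \<open>expand \<open>(A + B)\<^sup>2 = (A - B)\<^sup>2 + 4AB\<close>\<close>
  ultimately have "4 * \<epsilon> * (A + B)\<^sup>2 \<le> u * (2 * (A + B)) * (2 * (A * B))"
    by (simp add: power2_eq_square algebra_simps)
  then have "(A + B) * (\<epsilon> * (A + B)) \<le> (A + B) * (u * (A * B))"
    by (simp add: power2_eq_square algebra_simps)
  then show ?thesis using brackets_pos by (simp add: u_def mult_le_cancel_left_pos add_pos_pos)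
qed

lemma mp_phase_ge_gap': "\<epsilon> \<le> (A + B - D) * A" "\<epsilon> \<le> (A + B - D) * B"
proof -
  have pos: "0 \<le> A * \<epsilon>" "0 \<le> B * \<epsilon>" using gap_props brackets_pos by auto
  have "B * \<epsilon> \<le> \<epsilon> * (A + B)" using pos by (simp add: algebra_simps)
  also have "\<dots> \<le> (A + B - D) * (A * B)" by (rule mp_phase_ge_gap)
  also have "\<dots> = B * ((A + B - D) * A)" by (simp add: algebra_simps)
  finally show "\<epsilon> \<le> (A + B - D) * A" using brackets_pos by (simp add: mult_le_cancel_left_pos)
  have "A * \<epsilon> \<le> \<epsilon> * (A + B)" using pos by (simp add: algebra_simps)
  also have "\<dots> \<le> (A + B - D) * (A * B)" by (rule mp_phase_ge_gap)
  also have "\<dots> = A * ((A + B - D) * B)" by (simp add: algebra_simps)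
  finally show "\<epsilon> \<le> (A + B - D) * B" using brackets_pos by (simp add: mult_le_cancel_left_pos)
qed

end

definition mp_angle_const :: "real \<Rightarrow> real \<Rightarrow> real" where
  "mp_angle_const m M = min 1 (gap_const m M) * bracket_lo m M / (48 * bracket_hi m M * (M + 1))"

definition mp_inverse_const :: "real \<Rightarrow> real \<Rightarrow> real" where
  "mp_inverse_const m M = gap_const m M / (2 * bracket_hi m M)"

context gapped_bracket_triangle
begin

lemma mp_ea_le_ed:
  assumes "b \<le> a" "B < 2 * D" shows "k * ea \<le> 12 * K * ed"
proof (cases "2 * b \<le> a")
  case True
  then have "ea \<le> 3 * ed" using ea_bounds(4) triangle_ineqs(1) ed_bounds(2,3) by linarith
  moreover have "k * ea \<le> ea" using k_props ea_bounds(2) mult_right_mono[of k 1 ea] by auto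
  moreover have "3 * ed \<le> 12 * K * ed" using K_props ed_bounds(2) by simp
  ultimately show ?thesis by linarith
next
  case False
  then have "A \<le> 6 * D" using A_bounds(4) B_bounds(2,3) assms(2) by linarith
  moreover have "6 * D \<le> 12 * K * ed" using brackets_comparable(6) brackets_pos by linarith
  ultimately show ?thesis using brackets_comparable(1) by linarith
qed

lemma mp_angle_bound_large:
  assumes "b \<le> a" "B < 2 * D" "1 \<le> b"
  shows "k * (ea * eb * (a * b + p)) \<le> 48 * K * (M + 1) * (a * b * ed * (A + B - D))"
proof -
  define u where "u = A + B - D"
  define P where "P = a * b + p"
  have u0: "0 \<le> u" using mp_phase_pos u_def by simp
  have P0: "0 \<le> P" using p_le P_def by simp
  have "P \<le> u * (A + B)" using mp_phase_ge_inner u_def P_def by simp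
  also have "\<dots> \<le> u * (2 * ((M + 1) * a))"
  proof (rule mult_left_mono[OF _ u0])
    have "M \<le> M * a" using M_pos assms(1,3) mult_left_mono[of 1 a M] by simp
    moreover have "B \<le> A" using assms(1) B_le_A_iff by simp
    ultimately show "A + B \<le> 2 * ((M + 1) * a)" using A_bounds(4) by (simp add: algebra_simps)
  qed
  finally have P_le: "P \<le> u * (2 * ((M + 1) * a))" .
  have "(k * ea) * eb \<le> (12 * K * ed) * (2 * b)"
    using eb_bounds(4) assms(3) by (intro mult_mono[OF mp_ea_le_ed[OF assms(1,2)]]) (use K_props brackets_pos in auto)
  then have "(k * ea) * eb * P \<le> (12 * K * ed) * (2 * b) * (u * (2 * ((M + 1) * a)))"
    by (rule mult_mono[OF _ P_le]) (use K_props brackets_pos b_nonneg P0 in auto)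
  then show ?thesis by (simp add: u_def P_def algebra_simps)
qed

lemma mp_angle_bound_small:
  assumes "b \<le> a" "B < 2 * D" "b < 1"
  shows "min 1 \<epsilon> * k * (ea * eb * (a * b + p)) \<le> 48 * K * (M + 1) * (a * b * ed * (A + B - D))"
proof -
  define u where "u = A + B - D"
  define P where "P = a * b + p"
  have u0: "0 \<le> u" using mp_phase_pos u_def by simp
  have P0: "0 \<le> P" using p_le P_def by simp
  have "(k * ea) * eb \<le> (12 * K * ed) * 2"
    using eb_bounds(4) assms(3) by (intro mult_mono[OF mp_ea_le_ed[OF assms(1,2)]]) (use K_props brackets_pos in auto)
  then have "(k * ea) * eb * P \<le> (12 * K * ed) * 2 * (2 * (a * b))"
    by (rule mult_mono) (use K_props brackets_pos P0 p_le P_def in auto)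
  then have small: "k * ea * eb * P \<le> 48 * K * (a * b * ed)" by (simp add: algebra_simps)
  have "\<epsilon> \<le> u * B" using mp_phase_ge_gap' u_def by simp
  also have "\<dots> \<le> u * (M + 1)" using B_bounds(4) assms(3) u0 by (intro mult_left_mono) auto
  finally have gap_le: "\<epsilon> \<le> u * (M + 1)" .
  have "0 \<le> 48 * K * (a * b * ed)" using K_props a_nonneg b_nonneg brackets_pos by simp
  moreover have "min 1 \<epsilon> * k * (ea * eb * P) \<le> \<epsilon> * (k * ea * eb * P)"
    using k_props brackets_pos P0 gap_props mult_right_mono[of "min 1 \<epsilon>" \<epsilon> "k * ea * eb * P"]
    by (simp add: algebra_simps)
  moreover have "\<epsilon> * (k * ea * eb * P) \<le> \<epsilon> * (48 * K * (a * b * ed))"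
    using small gap_props by (intro mult_left_mono) auto
  ultimately have "min 1 \<epsilon> * k * (ea * eb * P) \<le> (u * (M + 1)) * (48 * K * (a * b * ed))"
    using gap_le mult_right_mono by (smt (verit))
  then show ?thesis by (simp add: u_def P_def algebra_simps)
qed

lemma mp_angle_bound_ordered:
  assumes "b \<le> a" "B < 2 * D"
  shows "min 1 \<epsilon> * k * (ea * eb * (a * b + p)) \<le> 48 * K * (M + 1) * (a * b * ed * (A + B - D))"
proof (cases "1 \<le> b")
  case True
  have "0 \<le> a * b + p" using p_le by simp
  then have "0 \<le> k * (ea * eb * (a * b + p))" using k_props brackets_pos by simp
  then have "min 1 \<epsilon> * k * (ea * eb * (a * b + p)) \<le> k * (ea * eb * (a * b + p))"
    using mult_right_mono[of "min 1 \<epsilon>" 1 "k * (ea * eb * (a * b + p))"] by (simp add: mult.assoc)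
  then show ?thesis by (rule order_trans[OF _ mp_angle_bound_large[OF assms True]])
next
  case False
  then show ?thesis using mp_angle_bound_small[OF assms] by simp
qed

lemma mp_angle_bound:
  assumes "min A B < 2 * D"
  shows "mp_angle_const m M * (ea * eb * (a * b + p)) \<le> a * b * ed * (A + B - D)"
proof -
  have "min 1 \<epsilon> * k * (ea * eb * (a * b + p)) \<le> 48 * K * (M + 1) * (a * b * ed * (A + B - D))"
  proof (cases "b \<le> a")
    case True
    then have "B < 2 * D" using assms B_le_A_iff by (simp add: min_def split: if_splits)
    then show ?thesis using mp_angle_bound_ordered[OF True] by simp
  next
    case False
    interpret sw: gapped_bracket_triangle m M b a p d by (rule swap_gapped)
    have "A < 2 * D" using assms False B_le_A_iff by (simp add: min_def split: if_splits)
    then show ?thesis using sw.mp_angle_bound_ordered False by (simp add: algebra_simps)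
  qed
  moreover have "0 < 48 * K * (M + 1)" using K_props M_pos by simp
  ultimately show ?thesis by (simp add: mp_angle_const_def pos_divide_le_eq mult.commute mult.left_commute)
qed

lemma mp_inverse_bound:
  assumes "min A B < 2 * D"
  shows "mp_inverse_const m M \<le> (A + B - D) * ea" "mp_inverse_const m M \<le> (A + B - D) * eb"
    "mp_inverse_const m M \<le> (A + B - D) * ed"
proof -
  define u where "u = A + B - D"
  have u0: "0 \<le> u" using mp_phase_pos u_def by simp
  have scale: "mp_inverse_const m M \<le> u * x" if "\<epsilon> \<le> u * (2 * K * x)" for x
    using that K_props by (simp add: mp_inverse_const_def pos_divide_le_eq algebra_simps)
  have "\<epsilon> \<le> u * min A B" using mp_phase_ge_gap' u_def by (simp add: min_def)
  also have "\<dots> \<le> u * (2 * K * ed)"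
    using assms brackets_comparable(6) u0 by (intro mult_left_mono) auto
  finally show "mp_inverse_const m M \<le> (A + B - D) * ed" using scale u_def by simp
  have "\<epsilon> \<le> u * A" using mp_phase_ge_gap' u_def by simp
  also have "\<dots> \<le> u * (2 * K * ea)"
    using brackets_comparable(2) brackets_pos K_props u0 by (intro mult_left_mono) auto
  finally show "mp_inverse_const m M \<le> (A + B - D) * ea" using scale u_def by simp
  have "\<epsilon> \<le> u * B" using mp_phase_ge_gap' u_def by simp
  also have "\<dots> \<le> u * (2 * K * eb)"
    using brackets_comparable(4) brackets_pos K_props u0 by (intro mult_left_mono) auto
  finally show "mp_inverse_const m M \<le> (A + B - D) * eb" using scale u_def by simp
qed

end

context bracket_triangle
begin

lemma pp_square_identity:
  "(D + A)\<^sup>2 - B\<^sup>2 = m\<^sup>2 + 2 * (a * b - p) + 2 * (A * D - a * d) + 2 * (a * (a - b + d))"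
  using A_bounds(1) B_bounds(1) D_bounds(1) d_sq by algebra

lemma ad_le_AD: "a * d \<le> A * D"
  using mult_mono[OF A_bounds(3) D_bounds(3)] a_nonneg d_nonneg brackets_pos by auto

lemma excess_nonneg: "0 \<le> a * (a - b + d)"
  using a_nonneg triangle_ineqs by simp

lemma pp_phase_pos: "B < D + A"
proof -
  have "0 < (D + A)\<^sup>2 - B\<^sup>2"
    unfolding pp_square_identity using m_pos p_le ad_le_AD excess_nonneg by (smt (verit) zero_less_power)
  then show ?thesis using power2_less_imp_less brackets_pos by (metis add_pos_pos diff_gt_0_iff_gt less_le)
qed

lemma pp_square_le: "(D + A)\<^sup>2 - B\<^sup>2 \<le> (D + A - B) * (3 * (A + D))"
proof -
  have "B \<le> 2 * A + D" using B_bounds(4) triangle_ineqs A_bounds(2,3) D_bounds(3) by linarith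
  then have "(D + A - B) * (D + A + B) \<le> (D + A - B) * (3 * (A + D))"
    using pp_phase_pos brackets_pos by (intro mult_left_mono) auto
  then show ?thesis by (simp add: power2_eq_square algebra_simps)
qed

lemma AD_minus_ad_lower: "k\<^sup>2 * (A\<^sup>2 + D\<^sup>2) \<le> 2 * ((A * D - a * d) * (A * D + a * d))"
proof -
  have id: "(A * D - a * d) * (A * D + a * d) = M\<^sup>2 * m\<^sup>2 + M\<^sup>2 * d\<^sup>2 + a\<^sup>2 * m\<^sup>2"
    using A_bounds(1) D_bounds(1) by algebra
  have k2: "k\<^sup>2 \<le> m\<^sup>2" "k\<^sup>2 \<le> M\<^sup>2" using k_props by (auto intro: power_mono)
  have "k\<^sup>2 * M\<^sup>2 \<le> M\<^sup>2 * m\<^sup>2" "k\<^sup>2 * a\<^sup>2 \<le> a\<^sup>2 * m\<^sup>2"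
    using mult_right_mono[OF k2(1), of "M\<^sup>2"] mult_right_mono[OF k2(1), of "a\<^sup>2"]
    by (simp_all add: mult.commute)
  moreover have "k\<^sup>2 * m\<^sup>2 \<le> M\<^sup>2 * m\<^sup>2" "k\<^sup>2 * d\<^sup>2 \<le> M\<^sup>2 * d\<^sup>2"
    using k2 by (auto intro: mult_right_mono)
  moreover have "0 \<le> a\<^sup>2 * m\<^sup>2" "0 \<le> M\<^sup>2 * d\<^sup>2" by auto
  ultimately have "k\<^sup>2 * M\<^sup>2 + k\<^sup>2 * a\<^sup>2 + k\<^sup>2 * m\<^sup>2 + k\<^sup>2 * d\<^sup>2
      \<le> 2 * (M\<^sup>2 * m\<^sup>2) + 2 * (M\<^sup>2 * d\<^sup>2) + 2 * (a\<^sup>2 * m\<^sup>2)"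
    by linarith
  then show ?thesis
    unfolding id A_bounds(1) D_bounds(1) by (simp add: algebra_simps)
qed

lemma pp_phase_ge_lo: "k\<^sup>2 * (A + D) \<le> (D + A - B) * (12 * (A * D))"
proof -
  define u where "u = D + A - B"
  define w where "w = A * D - a * d"
  have w0: "0 \<le> w" using ad_le_AD w_def by simp
  have "w * (A * D + a * d) \<le> w * (2 * (A * D))" using w0 ad_le_AD by (intro mult_left_mono) auto
  then have h1: "k\<^sup>2 * (A\<^sup>2 + D\<^sup>2) \<le> 2 * (w * (2 * (A * D)))"
    using AD_minus_ad_lower w_def by simp
  have "(A + D)\<^sup>2 \<le> 2 * (A\<^sup>2 + D\<^sup>2)"
    using sum_squares_ge_zero[of "A - D" 0] by (simp add: power2_eq_square algebra_simps)
  then have h2: "k\<^sup>2 * (A + D)\<^sup>2 \<le> k\<^sup>2 * (2 * (A\<^sup>2 + D\<^sup>2))" by (intro mult_left_mono) auto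
  have "2 * w \<le> (D + A)\<^sup>2 - B\<^sup>2"
    unfolding pp_square_identity using p_le excess_nonneg w_def by (smt (verit) zero_le_power2)
  then have h3: "(2 * w) * (4 * (A * D)) \<le> ((D + A)\<^sup>2 - B\<^sup>2) * (4 * (A * D))"
    using brackets_pos by (intro mult_right_mono) auto
  have h4: "((D + A)\<^sup>2 - B\<^sup>2) * (4 * (A * D)) \<le> (u * (3 * (A + D))) * (4 * (A * D))"
    using pp_square_le brackets_pos u_def by (intro mult_right_mono) auto
  have "k\<^sup>2 * (A + D)\<^sup>2 \<le> (u * (3 * (A + D))) * (4 * (A * D))"
    using h1 h2 h3 h4 by (simp add: algebra_simps)
  then have "(A + D) * (k\<^sup>2 * (A + D)) \<le> (A + D) * (u * (12 * (A * D)))"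
    by (simp add: power2_eq_square algebra_simps)
  then show ?thesis using brackets_pos by (simp add: u_def mult_le_cancel_left_pos add_pos_pos)
qed

lemma pp_phase_ge_lo': "k\<^sup>2 \<le> (D + A - B) * (12 * A)" "k\<^sup>2 \<le> (D + A - B) * (12 * D)"
proof -
  have pos: "0 \<le> A * k\<^sup>2" "0 \<le> D * k\<^sup>2" using brackets_pos by auto
  have "D * k\<^sup>2 \<le> k\<^sup>2 * (A + D)" using pos by (simp add: algebra_simps)
  also have "\<dots> \<le> (D + A - B) * (12 * (A * D))" by (rule pp_phase_ge_lo)
  also have "\<dots> = D * ((D + A - B) * (12 * A))" by (simp add: algebra_simps)
  finally show "k\<^sup>2 \<le> (D + A - B) * (12 * A)" using brackets_pos by (simp add: mult_le_cancel_left_pos)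
  have "A * k\<^sup>2 \<le> k\<^sup>2 * (A + D)" using pos by (simp add: algebra_simps)
  also have "\<dots> \<le> (D + A - B) * (12 * (A * D))" by (rule pp_phase_ge_lo)
  also have "\<dots> = A * ((D + A - B) * (12 * D))" by (simp add: algebra_simps)
  finally show "k\<^sup>2 \<le> (D + A - B) * (12 * D)" using brackets_pos by (simp add: mult_le_cancel_left_pos)
qed

lemma pp_phase_ge_min:
  assumes "b \<le> a" shows "min A D \<le> 3 * (D + A - B)"
proof -
  define u where "u = D + A - B"
  have "0 \<le> a * (a - b)" using a_nonneg assms by simp
  moreover have "a * (a - b + d) = a * (a - b) + a * d" by (simp add: algebra_simps)
  ultimately have "2 * (A * D) \<le> (D + A)\<^sup>2 - B\<^sup>2"
    unfolding pp_square_identity using p_le by (smt (verit) zero_le_power2)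
  then have uAD: "2 * (A * D) \<le> u * (3 * (A + D))" using pp_square_le u_def by simp
  have "min A D * (A + D) \<le> 2 * (A * D)"
  proof (cases "A \<le> D")
    case True
    then have "A * A \<le> A * D" using brackets_pos by (intro mult_left_mono) auto
    then show ?thesis using True by (simp add: algebra_simps)
  next
    case False
    then have "D * D \<le> A * D" using brackets_pos by (intro mult_right_mono) auto
    then show ?thesis using False by (simp add: algebra_simps)
  qed
  then have "(A + D) * min A D \<le> (A + D) * (3 * u)" using uAD by (simp add: algebra_simps)
  then show ?thesis using brackets_pos u_def by (simp add: mult_le_cancel_left_pos add_pos_pos)
qed

lemma inner_defect_props: "2 * (a * b - p) \<le> d\<^sup>2" "a * b - p \<le> 2 * (a * b)" "0 \<le> a * b - p"
proof -
  have "d\<^sup>2 = (a - b)\<^sup>2 + 2 * (a * b - p)" using d_sq by (simp add: power2_eq_square algebra_simps)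
  then show "2 * (a * b - p) \<le> d\<^sup>2" by simp
  show "a * b - p \<le> 2 * (a * b)" "0 \<le> a * b - p" using p_le by auto
qed

lemma ea_eb_le_ed:
  assumes "a < 1 \<or> b < 1" shows "ea * eb \<le> 6 * ed"
proof (cases "b < 1")
  case True
  have "ea \<le> 3 * ed" using ea_bounds(4) triangle_ineqs(1) True ed_bounds(2,3) by linarith
  moreover have "eb \<le> 2" using eb_bounds(4) True by linarith
  ultimately show ?thesis using brackets_pos mult_mono[of ea "3 * ed" eb 2] by simp
next
  case False
  then have "a < 1" using assms by simp
  then have "eb \<le> 3 * ed" "ea \<le> 2" using eb_bounds(4) triangle_ineqs(2) ea_bounds(4) ed_bounds(2,3) by linarith+
  then show ?thesis using brackets_pos mult_mono[of ea 2 eb "3 * ed"] by simp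
qed

lemma defect_le_D_large:
  assumes "1 \<le> a" "1 \<le> b" shows "ea * eb * (a * b - p) \<le> 2 * (a * b * ed * D)"
proof -
  define P where "P = a * b - p"
  have P0: "0 \<le> P" "2 * P \<le> d\<^sup>2" using inner_defect_props P_def by auto
  have ab0: "0 \<le> a * b" using a_nonneg b_nonneg by simp
  have "ea * eb * P \<le> (2 * a) * (2 * b) * P"
    using ea_bounds(4) eb_bounds(4) assms P0 brackets_pos by (intro mult_mono) auto
  also have "\<dots> = 2 * (a * b) * (2 * P)" by (simp add: algebra_simps)
  also have "\<dots> \<le> 2 * (a * b) * (d * d)"
    using P0 ab0 by (intro mult_left_mono) (auto simp: power2_eq_square)
  also have "\<dots> \<le> 2 * (a * b) * (ed * D)"
    using ed_bounds(3) D_bounds(3) d_nonneg ab0 brackets_pos by (intro mult_left_mono mult_mono) auto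
  finally show ?thesis by (simp add: P_def algebra_simps)
qed

lemma defect_le_small:
  assumes "a < 1 \<or> b < 1" shows "ea * eb * (a * b - p) \<le> 12 * (a * b * ed)"
proof -
  have "ea * eb * (a * b - p) \<le> (6 * ed) * (2 * (a * b))"
    using ea_eb_le_ed[OF assms] by (rule mult_mono) (use inner_defect_props brackets_pos in auto)
  then show ?thesis by (simp add: algebra_simps)
qed

lemma pp_defect_le_D: "m * (ea * eb * (a * b - p)) \<le> (2 * m + 12) * (a * b * ed * D)"
proof -
  have ab0: "0 \<le> a * b" using a_nonneg b_nonneg by simp
  show ?thesis
  proof (cases "1 \<le> a \<and> 1 \<le> b")
    case True
    then have "m * (ea * eb * (a * b - p)) \<le> m * (2 * (a * b * ed * D))"
      using defect_le_D_large m_pos by (intro mult_left_mono) auto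
    moreover have "0 \<le> a * b * ed * D" using ab0 brackets_pos by simp
    ultimately show ?thesis by (simp add: algebra_simps)
  next
    case False
    then have "m * (ea * eb * (a * b - p)) \<le> m * (12 * (a * b * ed))"
      using defect_le_small m_pos by (intro mult_left_mono) auto
    also have "\<dots> \<le> D * (12 * (a * b * ed))"
      using D_bounds(2) ab0 brackets_pos by (intro mult_right_mono) auto
    also have "\<dots> \<le> (2 * m + 12) * (a * b * ed * D)"
    proof -
      have "0 \<le> m * (a * b * ed * D)" using m_pos ab0 brackets_pos by simp
      then show ?thesis by (simp add: algebra_simps)
    qed
    finally show ?thesis .
  qed
qed

end

definition pp_angle_const :: "real \<Rightarrow> real \<Rightarrow> real" where
  "pp_angle_const m M =
     min (min (m / (3 * (2 * m + 12))) ((bracket_lo m M)\<^sup>2 / (72 * bracket_hi m M)))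
         (min (1 / 4) ((bracket_lo m M)\<^sup>2 / (144 * (M + 1))))"

definition pp_inverse_const :: "real \<Rightarrow> real \<Rightarrow> real" where
  "pp_inverse_const m M = min (bracket_lo m M / 3) ((bracket_lo m M)\<^sup>2 / (12 * bracket_hi m M))"

lemma mult_le_by_ratio:
  fixes r q X Y :: real
  assumes "r * X \<le> q * Y" "0 \<le> X" "0 < q" shows "r / q * X \<le> Y"
  using assms by (simp add: pos_divide_le_eq mult.commute)

context bracket_triangle
begin

lemma B_le: "B \<le> 2 * A + D"
  using B_bounds(4) triangle_ineqs A_bounds(2,3) D_bounds(3) by linarith

lemma pp_angle_bound_ordered:
  assumes "b \<le> a"
  shows "min (m / (3 * (2 * m + 12))) (k\<^sup>2 / (72 * K)) * (ea * eb * (a * b - p)) \<le> a * b * ed * (D + A - B)"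
proof -
  define u where "u = D + A - B"
  define X where "X = ea * eb * (a * b - p)"
  have X0: "0 \<le> X" using X_def inner_defect_props brackets_pos by simp
  have ab0: "0 \<le> a * b" using a_nonneg b_nonneg by simp
  have min_le: "min A D \<le> 3 * u" using pp_phase_ge_min[OF assms] u_def by simp
  show ?thesis
  proof (cases "D \<le> A")
    case True
    then have "D \<le> 3 * u" using min_le by (simp add: min_def split: if_splits)
    then have "(2 * m + 12) * (a * b * ed * D) \<le> (2 * m + 12) * (a * b * ed * (3 * u))"
      using m_pos ab0 brackets_pos by (intro mult_left_mono) auto
    moreover have "m * X \<le> (2 * m + 12) * (a * b * ed * D)"
      using pp_defect_le_D by (simp add: X_def)
    ultimately have "m * X \<le> (2 * m + 12) * (a * b * ed * (3 * u))" by linarith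
    then have "m * X \<le> (3 * (2 * m + 12)) * (a * b * ed * u)" by (simp add: algebra_simps)
    then have "(m / (3 * (2 * m + 12))) * X \<le> a * b * ed * u"
      by (rule mult_le_by_ratio) (use X0 m_pos in auto)
    moreover have "min (m / (3 * (2 * m + 12))) (k\<^sup>2 / (72 * K)) * X \<le> (m / (3 * (2 * m + 12))) * X"
      using mult_right_mono[OF min.cobounded1 X0] .
    ultimately show ?thesis by (simp add: X_def u_def)
  next
    case False
    then have A_le: "A \<le> 3 * u" using min_le by (simp add: min_def split: if_splits)
    have ea_le: "k * ea \<le> 2 * A" using brackets_comparable(1) brackets_pos by linarith
    have eb_le: "k * eb \<le> 6 * (K * ed)"
      using brackets_comparable(3,6) B_le False brackets_pos K_props by linarith
    have "(k * ea) * (k * eb) \<le> (2 * A) * (6 * (K * ed))"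
      using mult_mono[OF ea_le eb_le] brackets_pos k_props by simp
    then have "(k * ea) * (k * eb) * (a * b - p) \<le> (2 * A) * (6 * (K * ed)) * (2 * (a * b))"
      by (rule mult_mono) (use brackets_pos K_props inner_defect_props in auto)
    also have "\<dots> \<le> (2 * (3 * u)) * (6 * (K * ed)) * (2 * (a * b))"
      using A_le K_props brackets_pos ab0 by (intro mult_right_mono) auto
    finally have "k\<^sup>2 * X \<le> (72 * K) * (a * b * ed * u)"
      unfolding X_def by (simp add: power2_eq_square algebra_simps)
    then have "(k\<^sup>2 / (72 * K)) * X \<le> a * b * ed * u"
      by (rule mult_le_by_ratio) (use X0 K_props in auto)
    moreover have "min (m / (3 * (2 * m + 12))) (k\<^sup>2 / (72 * K)) * X \<le> (k\<^sup>2 / (72 * K)) * X"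
      using mult_right_mono[OF min.cobounded2 X0] .
    ultimately show ?thesis by (simp add: X_def u_def)
  qed
qed

lemma B_minus_A_le: assumes "a \<le> b" shows "B - A \<le> b - a"
proof -
  have "(B - A) * (B + A) = (b - a) * (b + a)" using A_bounds(1) B_bounds(1) by algebra
  also have "\<dots> \<le> (b - a) * (B + A)" using assms A_bounds(3) B_bounds(3) by (intro mult_left_mono) auto
  finally have "(B + A) * (B - A) \<le> (B + A) * (b - a)" by (simp add: algebra_simps)
  then show ?thesis using brackets_pos by (simp add: mult_le_cancel_left_pos add_pos_pos)
qed

lemma pp_defect_le_phase:
  assumes "a \<le> b" shows "a * b - p \<le> (D + A - B) * ed"
proof -
  have u_ge: "d - (b - a) \<le> D + A - B" using B_minus_A_le[OF assms] D_bounds(3) by linarith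
  have "(d - (b - a)) * (d + (b - a)) = 2 * (a * b - p)"
    using d_sq by (simp add: power2_eq_square algebra_simps)
  moreover have "(d - (b - a)) * (d + (b - a)) \<le> (d - (b - a)) * (2 * d)"
    using triangle_ineqs by (intro mult_left_mono) auto
  ultimately have "a * b - p \<le> (d - (b - a)) * d" by simp
  also have "\<dots> \<le> (D + A - B) * ed" using u_ge ed_bounds(3) d_nonneg triangle_ineqs by (intro mult_mono) auto
  finally show ?thesis .
qed

lemma pp_angle_bound_ordered':
  assumes "a \<le> b"
  shows "min (1 / 4) (k\<^sup>2 / (144 * (M + 1))) * (ea * eb * (a * b - p)) \<le> a * b * ed * (D + A - B)"
proof -
  define u where "u = D + A - B"
  define X where "X = ea * eb * (a * b - p)"
  have X0: "0 \<le> X" using X_def inner_defect_props brackets_pos by simp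
  have ab0: "0 \<le> a * b" using a_nonneg b_nonneg by simp
  show ?thesis
  proof (cases "1 \<le> a")
    case True
    have "X \<le> (2 * a) * (2 * b) * (u * ed)"
      unfolding X_def using ea_bounds(4) eb_bounds(4) True assms pp_defect_le_phase[OF assms] inner_defect_props
        brackets_pos u_def by (intro mult_mono) auto
    then have "1 * X \<le> 4 * (a * b * ed * u)" by (simp add: algebra_simps)
    then have "(1 / 4) * X \<le> a * b * ed * u" by (rule mult_le_by_ratio) (use X0 in auto)
    moreover have "min (1 / 4) (k\<^sup>2 / (144 * (M + 1))) * X \<le> (1 / 4) * X"
      using mult_right_mono[OF min.cobounded1 X0] .
    ultimately show ?thesis by (simp add: X_def u_def)
  next
    case False
    then have "a < 1 \<or> b < 1" by simp
    then have "X \<le> 12 * (a * b * ed)" unfolding X_def by (rule defect_le_small)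
    moreover have "k\<^sup>2 \<le> u * (12 * (M + 1))"
    proof -
      have "u * (12 * A) \<le> u * (12 * (M + 1))"
        using A_bounds(4) False pp_phase_pos u_def by (intro mult_left_mono) auto
      moreover have "k\<^sup>2 \<le> u * (12 * A)" using pp_phase_ge_lo'(1) by (simp add: u_def)
      ultimately show ?thesis by linarith
    qed
    moreover have "0 \<le> u * (12 * (M + 1))" using pp_phase_pos M_pos u_def by simp
    ultimately have "k\<^sup>2 * X \<le> (u * (12 * (M + 1))) * (12 * (a * b * ed))"
      using ab0 brackets_pos X0 by (intro mult_mono) auto
    then have "k\<^sup>2 * X \<le> (144 * (M + 1)) * (a * b * ed * u)" by (simp add: algebra_simps)
    then have "(k\<^sup>2 / (144 * (M + 1))) * X \<le> a * b * ed * u"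
      by (rule mult_le_by_ratio) (use X0 M_pos in auto)
    moreover have "min (1 / 4) (k\<^sup>2 / (144 * (M + 1))) * X \<le> (k\<^sup>2 / (144 * (M + 1))) * X"
      using mult_right_mono[OF min.cobounded2 X0] .
    ultimately show ?thesis by (simp add: X_def u_def)
  qed
qed

lemma pp_angle_bound: "pp_angle_const m M * (ea * eb * (a * b - p)) \<le> a * b * ed * (D + A - B)"
proof -
  have X0: "0 \<le> ea * eb * (a * b - p)" using inner_defect_props brackets_pos by simp
  show ?thesis
  proof (cases "b \<le> a")
    case True
    have "pp_angle_const m M * (ea * eb * (a * b - p))
        \<le> min (m / (3 * (2 * m + 12))) (k\<^sup>2 / (72 * K)) * (ea * eb * (a * b - p))"
      unfolding pp_angle_const_def by (intro mult_right_mono min.cobounded1 X0)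
    then show ?thesis using pp_angle_bound_ordered[OF True] by linarith
  next
    case False
    have "pp_angle_const m M * (ea * eb * (a * b - p))
        \<le> min (1 / 4) (k\<^sup>2 / (144 * (M + 1))) * (ea * eb * (a * b - p))"
      unfolding pp_angle_const_def by (intro mult_right_mono min.cobounded2 X0)
    then show ?thesis using pp_angle_bound_ordered' False by linarith
  qed
qed

lemma pp_inverse_bound:
  "pp_inverse_const m M \<le> (D + A - B) * ea" "pp_inverse_const m M \<le> (D + A - B) * eb"
  "pp_inverse_const m M \<le> (D + A - B) * ed"
proof -
  define u where "u = D + A - B"
  have u0: "0 \<le> u" using pp_phase_pos u_def by simp
  have "pp_inverse_const m M \<le> u * ea \<and> pp_inverse_const m M \<le> u * eb \<and> pp_inverse_const m M \<le> u * ed"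
  proof (cases "b \<le> a")
    case True
    have "k \<le> min A D" using k_props A_bounds(2) D_bounds(2) by simp
    moreover have "min A D \<le> 3 * u" using pp_phase_ge_min[OF True] by (simp add: u_def)
    ultimately have "k / 3 \<le> u" by linarith
    moreover have "u \<le> u * ea" "u \<le> u * eb" "u \<le> u * ed"
      using u0 ea_bounds(2) eb_bounds(2) ed_bounds(2) mult_left_mono[of 1 _ u] by auto
    moreover have "pp_inverse_const m M \<le> k / 3" by (simp add: pp_inverse_const_def)
    ultimately show ?thesis by linarith
  next
    case False
    have scale: "pp_inverse_const m M \<le> u * x" if "k\<^sup>2 \<le> u * (12 * Y)" "Y \<le> K * x" for Y x
    proof -
      have "u * (12 * Y) \<le> u * (12 * (K * x))" using that u0 by (intro mult_left_mono) auto
      then have "k\<^sup>2 \<le> (12 * K) * (u * x)" using that by (simp add: algebra_simps)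
      then have "k\<^sup>2 / (12 * K) \<le> u * x" using K_props by (simp add: pos_divide_le_eq mult.commute)
      moreover have "pp_inverse_const m M \<le> k\<^sup>2 / (12 * K)" by (simp add: pp_inverse_const_def)
      ultimately show ?thesis by linarith
    qed
    have "A \<le> B" using False a_nonneg by (intro jbracket_mono) simp
    then have "u * (12 * A) \<le> u * (12 * B)" using u0 by (intro mult_left_mono) auto
    moreover have "k\<^sup>2 \<le> u * (12 * A)" using pp_phase_ge_lo'(1) by (simp add: u_def)
    ultimately have "k\<^sup>2 \<le> u * (12 * B)" by linarith
    then show ?thesis
      using scale[OF pp_phase_ge_lo'(1)[folded u_def] brackets_comparable(2)]
        scale[OF _ brackets_comparable(4)] scale[OF pp_phase_ge_lo'(2)[folded u_def] brackets_comparable(6)]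
      by blast
  qed
  then show "pp_inverse_const m M \<le> (D + A - B) * ea" "pp_inverse_const m M \<le> (D + A - B) * eb"
    "pp_inverse_const m M \<le> (D + A - B) * ed" using u_def by auto
qed

end

lemma bounds_from_large_phase:
  fixes u \<kappa> C ea eb ed \<theta> :: real
  assumes "\<kappa> * ea \<le> u" "\<kappa> * eb \<le> u" "\<kappa> * ed \<le> u" "0 < C" "C \<le> \<kappa> / 16"
    and "1 \<le> ea" "1 \<le> eb" "1 \<le> ed" "\<theta>\<^sup>2 \<le> 16"
  shows "C * max ed (max ea eb) \<le> u" "C * min ea eb * \<theta>\<^sup>2 \<le> u"
    "C * max (inverse ed) (max (inverse ea) (inverse eb)) \<le> u"
proof -
  have C_le: "C * x \<le> u" if "1 \<le> x" "\<kappa> * x \<le> u" for x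
    using mult_right_mono[of C \<kappa> x] assms(4,5) that by linarith
  show "C * max ed (max ea eb) \<le> u"
    using C_le assms by (simp add: max_def)
  have "min ea eb * \<theta>\<^sup>2 \<le> ea * 16" using assms by (intro mult_mono) auto
  then have "C * (min ea eb * \<theta>\<^sup>2) \<le> (\<kappa> / 16) * (ea * 16)"
    using assms by (intro mult_mono) auto
  then show "C * min ea eb * \<theta>\<^sup>2 \<le> u" using assms(1) by (simp add: mult.assoc)
  have "C * inverse x \<le> u" if "1 \<le> x" for x
  proof -
    have "inverse x \<le> 1" using that by (simp add: inverse_le_1_iff)
    then have "C * inverse x \<le> C * ea" using assms(4,6) by (intro mult_left_mono) auto
    then show ?thesis using C_le[OF assms(6,1)] by linarith
  qed
  then show "C * max (inverse ed) (max (inverse ea) (inverse eb)) \<le> u"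
    using assms by (simp add: max_def)
qed

lemma bounds_from_inverse_phase:
  fixes u C c ea eb ed :: real
  assumes "0 < C" "C \<le> c" "c \<le> u * ea" "c \<le> u * eb" "c \<le> u * ed" "0 < ea" "0 < eb" "0 < ed"
  shows "C * max (inverse ed) (max (inverse ea) (inverse eb)) \<le> u"
proof -
  have "C * inverse x \<le> u" if "0 < x" "c \<le> u * x" for x
  proof -
    have "C * inverse x \<le> c * inverse x" using assms that by (intro mult_right_mono) auto
    also have "\<dots> \<le> u" using that by (simp add: divide_inverse[symmetric] pos_divide_le_eq)
    finally show ?thesis .
  qed
  then show ?thesis using assms by (simp add: max_def)
qed

lemma bounds_from_angle_phase:
  fixes u C c a b ea eb ed P \<theta> :: real
  assumes "0 < c" "0 < C" "C \<le> c / 36" "0 < a" "0 < b"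
    and "1 \<le> ea" "1 \<le> eb" "1 \<le> ed" "ed \<le> ea + eb" "0 \<le> P"
    and "\<theta>\<^sup>2 * (a * b) \<le> 18 * P" "c * (ea * eb * P) \<le> a * b * ed * u"
  shows "C * (ea * eb / ed) * \<theta>\<^sup>2 \<le> u" "C * min ea eb * \<theta>\<^sup>2 \<le> u"
proof -
  define Y where "Y = ea * eb / ed * \<theta>\<^sup>2"
  have ab: "0 < a * b" using assms by simp
  have "(a * b) * (c * ea * eb * \<theta>\<^sup>2) \<le> (a * b) * (18 * ed * u)"
  proof -
    have "(a * b) * (c * ea * eb * \<theta>\<^sup>2) = c * (ea * eb * (\<theta>\<^sup>2 * (a * b)))" by (simp add: algebra_simps)
    also have "\<dots> \<le> c * (ea * eb * (18 * P))" using assms by (intro mult_left_mono) auto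
    also have "\<dots> \<le> (a * b) * (18 * ed * u)" using assms(12) by (simp add: algebra_simps)
    finally show ?thesis .
  qed
  then have "c * ea * eb * \<theta>\<^sup>2 \<le> 18 * ed * u" using ab by (simp add: mult_le_cancel_left_pos)
  then have cY: "c * Y \<le> 18 * u" using assms by (simp add: Y_def pos_divide_le_eq algebra_simps)
  have Y0: "0 \<le> Y" using assms by (simp add: Y_def)
  have u0: "0 \<le> u" using cY Y0 assms(1) by (smt (verit) mult_nonneg_nonneg)
  have "C * Y \<le> c * Y / 36" using assms Y0 mult_right_mono[of C "c / 36" Y] by simp
  moreover have "0 \<le> C * Y" using assms Y0 by simp
  ultimately have CY: "2 * (C * Y) \<le> u" "C * Y \<le> u" using cY u0 by linarith+
  then show "C * (ea * eb / ed) * \<theta>\<^sup>2 \<le> u" by (simp add: Y_def mult.assoc)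
  have "min ea eb * ed \<le> min ea eb * (ea + eb)" using assms by (intro mult_left_mono) auto
  also have "\<dots> = ea * min ea eb + min ea eb * eb" by (simp add: algebra_simps)
  also have "\<dots> \<le> ea * eb + ea * eb"
    using mult_left_mono[of "min ea eb" eb ea] mult_right_mono[of "min ea eb" ea eb] assms
    by (intro add_mono) auto
  also have "\<dots> = 2 * (ea * eb)" by simp
  finally have "min ea eb \<le> 2 * (ea * eb) / ed" using assms by (simp add: pos_le_divide_eq)
  then have "min ea eb * \<theta>\<^sup>2 \<le> (2 * (ea * eb) / ed) * \<theta>\<^sup>2" by (rule mult_right_mono) simp
  then have "C * (min ea eb * \<theta>\<^sup>2) \<le> C * (2 * Y)" using assms by (intro mult_left_mono) (auto simp: Y_def)
  then have "C * min ea eb * \<theta>\<^sup>2 \<le> 2 * (C * Y)" by (simp add: mult.assoc mult.left_commute)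
  then show "C * min ea eb * \<theta>\<^sup>2 \<le> u" using CY(1) by linarith
qed

definition phase_const :: "real \<Rightarrow> real \<Rightarrow> real" where
  "phase_const m M = min (bracket_lo m M / 16) (min (mp_inverse_const m M)
     (min (mp_angle_const m M / 36) (min (pp_angle_const m M / 36) (pp_inverse_const m M))))"

lemma phase_const_pos:
  assumes "0 < m" "m < 2 * M" shows "0 < phase_const m M"
proof -
  interpret gapped_bracket_triangle m M 0 0 0 0
    using assms by unfold_locales auto
  have "0 < min 1 \<epsilon>" using gap_props by simp
  then show ?thesis using k_props K_props gap_props M_pos m_pos
    by (simp add: phase_const_def mp_inverse_const_def mp_angle_const_def
        pp_angle_const_def pp_inverse_const_def)
qed

lemma vangle_sq_le_16: "(vangle x y)\<^sup>2 \<le> 16"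
proof -
  have "(vangle x y)\<^sup>2 \<le> 4\<^sup>2"
    using vangle_range[of x y] pi_less_4 by (intro power_mono) auto
  then show ?thesis by simp
qed

definition phase_bounds :: "real \<Rightarrow> real \<Rightarrow> real \<Rightarrow> real \<Rightarrow> real \<Rightarrow> real \<Rightarrow> real^3 \<Rightarrow> real^3 \<Rightarrow> bool" where
  "phase_bounds c m M C s1 s2 \<xi>1 \<xi>2 =
     (let \<mu> = \<bar>mu m M s1 s2 \<xi>1 \<xi>2\<bar> in
       ((s1 = 1 \<and> s2 = -1) \<or>
        (s1 = -1 \<and> s2 = 1 \<and> jb m (\<xi>1 - \<xi>2) \<le> c * min (jb M \<xi>1) (jb M \<xi>2))
          \<longrightarrow> \<mu> \<ge> C * max (jb 1 (\<xi>1 - \<xi>2)) (max (jb 1 \<xi>1) (jb 1 \<xi>2))) \<and>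
       ((s1 = s2 \<or>
        (s1 = -1 \<and> s2 = 1 \<and> jb m (\<xi>1 - \<xi>2) > c * min (jb M \<xi>1) (jb M \<xi>2)))
          \<longrightarrow> \<xi>1 \<noteq> 0 \<longrightarrow> \<xi>2 \<noteq> 0 \<longrightarrow>
          \<mu> \<ge> C * (jb 1 \<xi>1 * jb 1 \<xi>2 / jb 1 (\<xi>1 - \<xi>2)) *
                 (vangle (s1 *\<^sub>R \<xi>1) (s2 *\<^sub>R \<xi>2))\<^sup>2) \<and>
       (\<xi>1 \<noteq> 0 \<longrightarrow> \<xi>2 \<noteq> 0 \<longrightarrow>
          \<mu> \<ge> C * min (jb 1 \<xi>1) (jb 1 \<xi>2) * (vangle (s1 *\<^sub>R \<xi>1) (s2 *\<^sub>R \<xi>2))\<^sup>2) \<and>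
       \<mu> \<ge> C * max (inverse (jb 1 (\<xi>1 - \<xi>2))) (max (inverse (jb 1 \<xi>1)) (inverse (jb 1 \<xi>2))))"

context
  fixes m M :: real and \<xi>1 \<xi>2 :: "real^3"
  assumes m_pos: "0 < m" and mass_gap: "m < 2 * M"
begin

interpretation gapped_bracket_triangle m M "norm \<xi>1" "norm \<xi>2" "\<xi>1 \<bullet> \<xi>2" "norm (\<xi>1 - \<xi>2)"
  using m_pos mass_gap dot_norm_neg[of \<xi>1 \<xi>2] Cauchy_Schwarz_ineq2[of \<xi>1 \<xi>2]
  by unfold_locales auto

abbreviation C where "C \<equiv> phase_const m M"

lemma C_props: "0 < C" "C \<le> k / 16" "C \<le> mp_inverse_const m M" "C \<le> mp_angle_const m M / 36"
  "C \<le> pp_angle_const m M / 36" "C \<le> pp_inverse_const m M"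
  using phase_const_pos[OF m_pos mass_gap] by (auto simp: phase_const_def)

lemma large_phase_bounds:
  assumes "k * ea \<le> u" "k * eb \<le> u" "k * ed \<le> u"
  shows "C * max ed (max ea eb) \<le> u" "C * min ea eb * (vangle x y)\<^sup>2 \<le> u"
    "C * max (inverse ed) (max (inverse ea) (inverse eb)) \<le> u"
  using bounds_from_large_phase[OF assms C_props(1,2) ea_bounds(2) eb_bounds(2) ed_bounds(2) vangle_sq_le_16] by auto

lemma angle_phase_bounds:
  assumes "0 < c" "C \<le> c / 36" "\<xi>1 \<noteq> 0" "\<xi>2 \<noteq> 0" "0 \<le> P"
    and "(vangle x y)\<^sup>2 * (norm \<xi>1 * norm \<xi>2) \<le> 18 * P"
    and "c * (ea * eb * P) \<le> norm \<xi>1 * norm \<xi>2 * ed * u"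
  shows "C * (ea * eb / ed) * (vangle x y)\<^sup>2 \<le> u" "C * min ea eb * (vangle x y)\<^sup>2 \<le> u"
  using bounds_from_angle_phase[OF assms(1) C_props(1) assms(2) _ _ ea_bounds(2) eb_bounds(2) ed_bounds(2) ed_le assms(5-7)]
    assms(3,4) by auto

lemma phase_bounds_pm: "phase_bounds (1/2) m M C 1 (-1) \<xi>1 \<xi>2"
proof -
  have mu: "\<bar>mu m M 1 (-1) \<xi>1 \<xi>2\<bar> = D + A + B"
    using brackets_pos by (simp add: mu_def jb_eq_jbracket)
  have "k * ea \<le> D + A + B" "k * eb \<le> D + A + B" "k * ed \<le> D + A + B"
    using brackets_comparable brackets_pos by linarith+
  from large_phase_bounds[OF this] show ?thesis
    unfolding phase_bounds_def Let_def mu by (auto simp: jb_eq_jbracket)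
qed

lemma phase_bounds_mp: "phase_bounds (1/2) m M C (-1) 1 \<xi>1 \<xi>2"
proof -
  let ?u = "A + B - D"
  have mu: "\<bar>mu m M (-1) 1 \<xi>1 \<xi>2\<bar> = ?u"
    using mp_phase_pos by (simp add: mu_def jb_eq_jbracket)
  have angle: "(vangle (- \<xi>1) \<xi>2)\<^sup>2 * (norm \<xi>1 * norm \<xi>2) \<le> 18 * (norm \<xi>1 * norm \<xi>2 + \<xi>1 \<bullet> \<xi>2)"
    if "\<xi>1 \<noteq> 0" "\<xi>2 \<noteq> 0"
    using vangle_sq_le[of "- \<xi>1" \<xi>2] that by simp
  show ?thesis
  proof (cases "D \<le> 1/2 * min A B")
    case True
    then have "k * ea \<le> ?u" "k * eb \<le> ?u" "k * ed \<le> ?u"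
      using brackets_comparable brackets_pos by (auto simp: min_def split: if_splits)
    from large_phase_bounds[OF this] show ?thesis
      using True unfolding phase_bounds_def Let_def mu by (auto simp: jb_eq_jbracket)
  next
    case False
    then have gap: "min A B < 2 * D" by linarith
    have c_pos: "0 < mp_angle_const m M"
      using k_props K_props gap_props M_pos by (simp add: mp_angle_const_def)
    have P0: "0 \<le> norm \<xi>1 * norm \<xi>2 + \<xi>1 \<bullet> \<xi>2" using p_le by simp
    note angle_bound = angle_phase_bounds[OF c_pos C_props(4) _ _ P0 angle mp_angle_bound[OF gap]]
    have "C * max (inverse ed) (max (inverse ea) (inverse eb)) \<le> ?u"
      using bounds_from_inverse_phase[OF C_props(1,3) mp_inverse_bound[OF gap] brackets_pos(4-6)] .
    then show ?thesis
      using False angle_bound unfolding phase_bounds_def Let_def mu by (auto simp: jb_eq_jbracket)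
  qed
qed

lemma phase_bounds_pp: "phase_bounds (1/2) m M C 1 1 \<xi>1 \<xi>2"
proof -
  have mu: "\<bar>mu m M 1 1 \<xi>1 \<xi>2\<bar> = D + A - B"
    using pp_phase_pos by (simp add: mu_def jb_eq_jbracket)
  have angle: "(vangle \<xi>1 \<xi>2)\<^sup>2 * (norm \<xi>1 * norm \<xi>2) \<le> 18 * (norm \<xi>1 * norm \<xi>2 - \<xi>1 \<bullet> \<xi>2)"
    if "\<xi>1 \<noteq> 0" "\<xi>2 \<noteq> 0"
    using vangle_sq_le that by simp
  have "0 < pp_angle_const m M"
    using k_props K_props M_pos m_pos by (simp add: pp_angle_const_def)
  note angle_bound = angle_phase_bounds[OF this C_props(5) _ _ inner_defect_props(3) angle pp_angle_bound]
  have "C * max (inverse ed) (max (inverse ea) (inverse eb)) \<le> D + A - B"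
    using bounds_from_inverse_phase[OF C_props(1,6) pp_inverse_bound brackets_pos(4-6)] .
  then show ?thesis
    using angle_bound unfolding phase_bounds_def Let_def mu by (auto simp: jb_eq_jbracket)
qed

lemma phase_bounds_mm: "phase_bounds (1/2) m M C (-1) (-1) \<xi>1 \<xi>2"
proof -
  interpret sw: gapped_bracket_triangle m M "norm \<xi>2" "norm \<xi>1" "\<xi>1 \<bullet> \<xi>2" "norm (\<xi>1 - \<xi>2)"
    by (rule swap_gapped)
  have mu: "\<bar>mu m M (-1) (-1) \<xi>1 \<xi>2\<bar> = D + B - A"
    using sw.pp_phase_pos by (simp add: mu_def jb_eq_jbracket)
  have angle: "(vangle (- \<xi>1) (- \<xi>2))\<^sup>2 * (norm \<xi>1 * norm \<xi>2) \<le> 18 * (norm \<xi>1 * norm \<xi>2 - \<xi>1 \<bullet> \<xi>2)"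
    if "\<xi>1 \<noteq> 0" "\<xi>2 \<noteq> 0"
    using vangle_sq_le[of "- \<xi>1" "- \<xi>2"] that by simp
  have "0 < pp_angle_const m M"
    using k_props K_props M_pos m_pos by (simp add: pp_angle_const_def)
  moreover have "pp_angle_const m M * (ea * eb * (norm \<xi>1 * norm \<xi>2 - \<xi>1 \<bullet> \<xi>2))
      \<le> norm \<xi>1 * norm \<xi>2 * ed * (D + B - A)"
    using sw.pp_angle_bound by (simp add: algebra_simps)
  ultimately have angle_bound:
    "C * (ea * eb / ed) * (vangle (- \<xi>1) (- \<xi>2))\<^sup>2 \<le> D + B - A"
    "C * min ea eb * (vangle (- \<xi>1) (- \<xi>2))\<^sup>2 \<le> D + B - A"
    if "\<xi>1 \<noteq> 0" "\<xi>2 \<noteq> 0"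
    using angle_phase_bounds[OF _ C_props(5) that inner_defect_props(3) angle[OF that]] by auto
  have "C * max (inverse ed) (max (inverse ea) (inverse eb)) \<le> D + B - A"
    using bounds_from_inverse_phase[OF C_props(1,6) sw.pp_inverse_bound(2,1,3) brackets_pos(4-6)] .
  then show ?thesis
    using angle_bound unfolding phase_bounds_def Let_def mu by (auto simp: jb_eq_jbracket)
qed

end

lemma phase_bounds_all:
  assumes "0 < m" "m < 2 * M" "s1 \<in> {1, -1}" "s2 \<in> {1, -1}"
  shows "phase_bounds (1/2) m M (phase_const m M) s1 s2 \<xi>1 \<xi>2"
  using assms phase_bounds_pm phase_bounds_mp phase_bounds_pp phase_bounds_mm by auto

theorem lemma2p2:
  "\<exists>c>0. \<forall>m M. 0 < m \<and> m < 2 * M \<longrightarrow> (\<exists>C>0. \<forall>s1 s2 \<xi>1 \<xi>2.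
     s1 \<in> {1, -1} \<and> s2 \<in> {1, -1} \<longrightarrow>
     (let \<mu> = \<bar>mu m M s1 s2 \<xi>1 \<xi>2\<bar> in
       ((s1 = 1 \<and> s2 = -1) \<or>
        (s1 = -1 \<and> s2 = 1 \<and> jb m (\<xi>1 - \<xi>2) \<le> c * min (jb M \<xi>1) (jb M \<xi>2))
          \<longrightarrow> \<mu> \<ge> C * max (jb 1 (\<xi>1 - \<xi>2)) (max (jb 1 \<xi>1) (jb 1 \<xi>2))) \<and>
       ((s1 = s2 \<or>
        (s1 = -1 \<and> s2 = 1 \<and> jb m (\<xi>1 - \<xi>2) > c * min (jb M \<xi>1) (jb M \<xi>2)))
          \<longrightarrow> \<xi>1 \<noteq> 0 \<longrightarrow> \<xi>2 \<noteq> 0 \<longrightarrow>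
          \<mu> \<ge> C * (jb 1 \<xi>1 * jb 1 \<xi>2 / jb 1 (\<xi>1 - \<xi>2)) *
                 (vangle (s1 *\<^sub>R \<xi>1) (s2 *\<^sub>R \<xi>2))\<^sup>2) \<and>
       (\<xi>1 \<noteq> 0 \<longrightarrow> \<xi>2 \<noteq> 0 \<longrightarrow>
          \<mu> \<ge> C * min (jb 1 \<xi>1) (jb 1 \<xi>2) * (vangle (s1 *\<^sub>R \<xi>1) (s2 *\<^sub>R \<xi>2))\<^sup>2) \<and>
       \<mu> \<ge> C * max (inverse (jb 1 (\<xi>1 - \<xi>2))) (max (inverse (jb 1 \<xi>1)) (inverse (jb 1 \<xi>2)))))"
proof -
  have bounds: "\<forall>m M. 0 < m \<and> m < 2 * M \<longrightarrow> (\<exists>C>0. \<forall>s1 s2 \<xi>1 \<xi>2.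
      s1 \<in> {1, -1} \<and> s2 \<in> {1, -1} \<longrightarrow> phase_bounds (1/2) m M C s1 s2 \<xi>1 \<xi>2)"
  proof (intro allI impI)
    fix m M :: real assume "0 < m \<and> m < 2 * M"
    then show "\<exists>C>0. \<forall>s1 s2 \<xi>1 \<xi>2. s1 \<in> {1, -1} \<and> s2 \<in> {1, -1} \<longrightarrow> phase_bounds (1/2) m M C s1 s2 \<xi>1 \<xi>2"
      using phase_const_pos phase_bounds_all by (intro exI[of _ "phase_const m M"]) auto
  qed
  then show ?thesis
    by (intro exI[of _ "1/2"] conjI) (simp, rule bounds[unfolded phase_bounds_def])
qed

end
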